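(* Let $\alpha=a_1\cdots a_n\neq (k-1)^n$ be a bracelet over $\{0,\dots,k-1\}$ and let $j$ be the index of the last symbol of $\alpha$ different from $k-1$. Then $\mathrm{LastNonMax}(\alpha)=a_1\cdots a_{j-1}(a_j+1)(k-1)^{n-j}$ is a bracelet.
   Context: Let $\Sigma=\{0,1,\dots,k-1\}$, $k\ge 2$. Strings are compared lexicographically ($\alpha<\beta$ if $\alpha$ is a proper prefix of $\beta$, or $\alpha$ has the smaller symbol at the first index where they differ). For $\alpha=a_1\cdots a_n$, $\alpha^R=a_n\cdots a_1$; $[\alpha]$ is the set of rotations of $\alpha$. $\alpha$ is a bracelet if it is the lexicographically smallest element of $[\alpha]\cup[\alpha^R]$. *)

theory Defs
  imports Main
begin

definition lex_less :: "nat list \<Rightarrow> nat list \<Rightarrow> bool" where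
  "lex_less a b \<longleftrightarrow>
     (length a < length b \<and> take (length a) b = a) \<or>
     (\<exists>i < min (length a) (length b). take i a = take i b \<and> a ! i < b ! i)"

definition rotations :: "nat list \<Rightarrow> nat list set" where
  "rotations a = {rotate i a | i. i < length a} \<union> {a}"

definition is_bracelet :: "nat list \<Rightarrow> bool" where
  "is_bracelet a \<longleftrightarrow>
     (\<forall>b \<in> rotations a \<union> rotations (rev a). \<not> lex_less b a)"

text \<open>j is the (1-based) index of the last symbol different from k-1;
  LastNonMax increments it and fills the remainder with k-1.\<close>

definition last_non_max :: "nat \<Rightarrow> nat list \<Rightarrow> nat list" where
  "last_non_max k a =
     (let j = Max {i. 1 \<le> i \<and> i \<le> length a \<and> a ! (i - 1) \<noteq> k - 1} in
      take (j - 1) a @ [a ! (j - 1) + 1] @ replicate (length a - j) (k - 1))"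

end

theory Submission
  imports Defs "HOL-Library.Multiset"
begin

text \<open>If the last symbol of \<open>a\<close> below \<open>m = k - 1\<close> is at position \<open>j\<close>, LastNonMax
  raises \<open>a ! j\<close> by one. A rotation, or rotation of the reversal, of the raised word is the
  same transform \<open>X\<close> of \<open>a\<close> with one entry equal to \<open>a ! j\<close> raised, and \<open>X\<close> is
  lexicographically at least \<open>a\<close> since \<open>a\<close> is a bracelet. At the first difference of the two
  raised words, a position up to \<open>j\<close> inherits the comparison of \<open>X\<close> with \<open>a\<close> (agreement
  with \<open>a\<close> through \<open>j\<close> would force \<open>X = a\<close>, the tail of \<open>a\<close> being maximal), while past
  \<open>j\<close> both raised words have equal multisets and the raised \<open>a\<close> is constantly \<open>m\<close>, so they
  coincide there.\<close>

lemma mset_rotate [simp]: "mset (rotate r xs) = mset xs"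
  by (metis append_take_drop_id mset_append rotate_drop_take union_commute)

lemma rotations_eq_range_rotate: "rotations xs = range (\<lambda>r. rotate r xs)"
proof -
  have "rotate r xs \<in> {rotate i xs | i. i < length xs} \<union> {xs}" for r
  proof (cases "xs = []")
    case False
    then have "r mod length xs < length xs" by simp
    then show ?thesis by (subst rotate_conv_mod) blast
  qed simp
  then show ?thesis
    unfolding rotations_def by (auto intro: range_eqI[of _ _ 0])
qed

lemma is_bracelet_iff_rotate:
  "is_bracelet a \<longleftrightarrow> (\<forall>r. \<not> lex_less (rotate r a) a \<and> \<not> lex_less (rotate r (rev a)) a)"
  unfolding is_bracelet_def rotations_eq_range_rotate by blast

lemma rotate_list_update:
  assumes "j < length xs"
  obtains i where "i < length xs" "\<And>v. rotate r (xs[j := v]) = (rotate r xs)[i := v]"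
proof -
  define s where "s = r mod length xs"
  have s: "s < length xs"
    unfolding s_def using assms by (intro mod_less_divisor) linarith
  have rot: "\<And>ys. length ys = length xs \<Longrightarrow> rotate r ys = drop s ys @ take s ys"
    by (simp add: s_def rotate_drop_take)
  show thesis
  proof (cases "j < s")
    case True
    show thesis
      by (rule that[of "length xs - s + j"])
        (use True s in \<open>auto simp: rot take_update_swap list_update_append\<close>)
  next
    case False
    show thesis
      by (rule that[of "j - s"])
        (use False assms in \<open>auto simp: rot drop_update_swap list_update_append\<close>)
  qed
qed

lemma not_lex_less_iff:
  assumes "length X = length a"
  shows "\<not> lex_less X a \<longleftrightarrow> (\<forall>i<length a. take i X = take i a \<longrightarrow> a ! i \<le> X ! i)"
  using assms unfolding lex_less_def by (auto simp: not_less)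

lemma eq_if_not_lex_less_and_max_tail:
  fixes X a :: "nat list"
  assumes len: "length X = length a" and ge: "\<not> lex_less X a"
    and X_le: "set X \<subseteq> {..m}" and tail: "\<forall>p. j < p \<and> p < length a \<longrightarrow> a ! p = m"
    and prefix: "take (Suc j) X = take (Suc j) a"
  shows "X = a"
proof -
  have "take q X = take q a" if "q \<le> length a" for q
    using that
  proof (induction q)
    case (Suc q)
    then have q: "q < length a" and IH: "take q X = take q a" by simp_all
    have "X ! q = a ! q"
    proof (cases "q \<le> j")
      case True
      then show ?thesis using prefix q len by (metis lessI le_imp_less_Suc nth_take)
    next
      case False
      have "a ! q \<le> X ! q" using ge IH q len by (simp add: not_lex_less_iff)
      moreover have "X ! q \<le> m" using X_le q len by (metis atMost_iff nth_mem subsetD)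
      ultimately show ?thesis using tail False q by simp
    qed
    then show ?case using IH q len by (simp add: take_Suc_conv_app_nth)
  qed simp
  then show ?thesis using len by (metis order_refl take_all)
qed

lemma eq_if_mset_eq_take_eq_replicate_drop:
  assumes "mset ys = mset xs" "take i ys = take i xs" "drop i xs = replicate l c"
  shows "ys = xs"
proof -
  have drop: "mset (drop i ys) = mset (drop i xs)"
    using assms(1,2) by (metis add_left_cancel append_take_drop_id mset_append)
  have "drop i ys = replicate l c"
  proof (rule replicate_eqI)
    show "length (drop i ys) = l"
      using mset_eq_length[OF drop] assms(3) by simp
    show "y = c" if "y \<in> set (drop i ys)" for y
      using that mset_eq_setD[OF drop] assms(3) by (simp split: if_splits)
  qed
  then show ?thesis
    using assms(2,3) by (metis append_take_drop_id)
qed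

lemma take_eq_iff_nth_eq:
  assumes "d \<le> length xs" "d \<le> length ys"
  shows "take d xs = take d ys \<longleftrightarrow> (\<forall>p<d. xs ! p = ys ! p)"
  using assms by (metis nth_take nth_take_lemma)

lemma take_list_update_eq_imp_take_eq:
  assumes len: "length X = length a" and ge: "\<not> lex_less X a"
    and i: "i < length a" and Xi: "X ! i < v" and d: "d \<le> j" "d \<le> length a"
    and pre: "take d (X[i := v]) = take d (a[j := v])"
  shows "d \<le> i" and "take d X = take d a"
proof -
  have pre_nth: "X[i := v] ! p = a[j := v] ! p" if "p < d" for p
    using pre that by (metis nth_take)
  have agree: "X ! p = a ! p" if "p < d" "p \<noteq> i" for p
    using pre_nth[OF that(1)] that d by simp
  show "d \<le> i"
  proof (rule ccontr)
    assume "\<not> d \<le> i"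
    then have "take i X = take i a"
      using agree i len by (subst take_eq_iff_nth_eq) auto
    then have "a ! i \<le> X ! i" using ge i len by (simp add: not_lex_less_iff)
    with Xi have "a ! i < v" by simp
    moreover have "X[i := v] ! i = a[j := v] ! i"
      using pre_nth \<open>\<not> d \<le> i\<close> by simp
    ultimately show False using \<open>\<not> d \<le> i\<close> d i len by simp
  qed
  then show "take d X = take d a"
    using agree d len by (subst take_eq_iff_nth_eq) auto
qed

lemma not_lex_less_increment:
  fixes X a :: "nat list"
  assumes mset: "mset X = mset a" and ge: "\<not> lex_less X a"
    and a_le: "set a \<subseteq> {..m}" and j: "j < length a" and aj: "a ! j < m"
    and tail: "\<forall>p. j < p \<and> p < length a \<longrightarrow> a ! p = m"
    and i: "i < length a" and Xi: "X ! i = a ! j"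
  shows "\<not> lex_less (X[i := a ! j + 1]) (a[j := a ! j + 1])"
proof -
  define Y B where "Y = X[i := a ! j + 1]" and "B = a[j := a ! j + 1]"
  have len: "length X = length a" using mset by (rule mset_eq_length)
  have X_le: "set X \<subseteq> {..m}" using mset_eq_setD[OF mset] a_le by simp
  have lenYB: "length Y = length a" "length B = length a"
    using len by (simp_all add: Y_def B_def)
  have Y: "Y ! p = (if p = i then a ! j + 1 else X ! p)" for p
    using i len by (simp add: Y_def nth_list_update)
  have B: "B ! p = (if p = j then a ! j + 1 else a ! p)" for p
    using j by (simp add: B_def nth_list_update)
  have "B ! d \<le> Y ! d" if d: "d < length a" and pre: "take d Y = take d B" for d
  proof (cases "j < d")
    case True
    have "mset Y = mset B"
      using mset Xi i j len by (simp add: Y_def B_def mset_update)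
    moreover have "take (Suc j) Y = take (Suc j) B"
      using pre True by (metis Suc_leI min.absorb1 take_take)
    moreover have "drop (Suc j) B = replicate (length a - Suc j) m"
      using tail by (intro replicate_eqI) (auto simp: B in_set_conv_nth lenYB)
    ultimately show ?thesis by (metis eq_if_mset_eq_take_eq_replicate_drop order_refl)
  next
    case False
    then have "d \<le> i" and prefix: "take d X = take d a"
      using take_list_update_eq_imp_take_eq[OF len ge i _ _ _ pre[unfolded Y_def B_def]] Xi d
      by simp_all
    then have ad: "a ! d \<le> X ! d" using ge d len by (simp add: not_lex_less_iff)
    consider "d < j" | "d = j" "i = j" | "d = j" "j < i"
      using False \<open>d \<le> i\<close> by linarith
    then show ?thesis
    proof cases
      case 1
      then show ?thesis using ad Y[of d] B[of d] Xi by (cases "d = i") simp_all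
    next
      case 2
      then show ?thesis using Y[of d] B[of d] by simp
    next
      case 3
      have "X ! j \<noteq> a ! j"
      proof
        assume "X ! j = a ! j"
        then have "take (Suc j) X = take (Suc j) a"
          using prefix 3 j len by (simp add: take_Suc_conv_app_nth)
        then have "X = a" using eq_if_not_lex_less_and_max_tail len ge X_le tail by blast
        then show False using Xi tail 3 i aj by simp
      qed
      then show ?thesis using ad 3 Y[of j] B[of j] by simp
    qed
  qed
  then have "\<not> lex_less Y B"
    using lenYB by (simp add: not_lex_less_iff)
  then show ?thesis by (simp add: Y_def B_def)
qed

lemma is_bracelet_increment_before_max_tail:
  assumes bracelet: "is_bracelet a" and a_le: "set a \<subseteq> {..m}"
    and j: "j < length a" and aj: "a ! j < m"
    and tail: "\<forall>p. j < p \<and> p < length a \<longrightarrow> a ! p = m"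
  shows "is_bracelet (a[j := a ! j + 1])"
proof -
  have incr: "\<not> lex_less (X[i := a ! j + 1]) (a[j := a ! j + 1])"
    if "\<not> lex_less X a" "mset X = mset a" "i < length X" "X[i := a ! j] = X" for X i
  proof -
    have "i < length a" using that(3) mset_eq_length[OF that(2)] by simp
    moreover have "X ! i = a ! j"
      by (rule iffD1[OF list_update_same_conv[OF that(3)] that(4)])
    ultimately show ?thesis
      by (rule not_lex_less_increment[OF that(2,1) a_le j aj tail])
  qed
  have no_rot: "\<not> lex_less (rotate r a) a" "\<not> lex_less (rotate r (rev a)) a" for r
    using bracelet unfolding is_bracelet_iff_rotate by auto
  show ?thesis
    unfolding is_bracelet_iff_rotate
  proof (intro allI conjI)
    fix r
    obtain i where i: "i < length a" and rot: "\<And>v. rotate r (a[j := v]) = (rotate r a)[i := v]"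
      using rotate_list_update[OF j, where r = r] by blast
    have "(rotate r a)[i := a ! j] = rotate r a"
      using rot[of "a ! j"] unfolding list_update_id by (rule sym)
    then show "\<not> lex_less (rotate r (a[j := a ! j + 1])) (a[j := a ! j + 1])"
      unfolding rot using incr[OF no_rot(1)] i by simp
  next
    fix r
    have rev_upd: "rev (a[j := v]) = (rev a)[length a - j - 1 := v]" for v
      using j by (rule rev_update)
    have j': "length a - j - 1 < length (rev a)"
      using j by simp
    obtain i where i: "i < length a"
      and rot: "\<And>v. rotate r ((rev a)[length a - j - 1 := v]) = (rotate r (rev a))[i := v]"
      using rotate_list_update[OF j', where r = r] by auto
    have rev_id: "(rev a)[length a - j - 1 := a ! j] = rev a"
      using rev_upd[of "a ! j"] unfolding list_update_id by (rule sym)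
    have "(rotate r (rev a))[i := a ! j] = rotate r (rev a)"
      using rot[of "a ! j"] unfolding rev_id by (rule sym)
    then show "\<not> lex_less (rotate r (rev (a[j := a ! j + 1]))) (a[j := a ! j + 1])"
      unfolding rev_upd rot using incr[OF no_rot(2)] i by simp
  qed
qed

lemma last_index_neqE:
  assumes "xs \<noteq> replicate (length xs) c"
  obtains j where "j < length xs" "xs ! j \<noteq> c" "\<forall>p. j < p \<and> p < length xs \<longrightarrow> xs ! p = c"
proof -
  define P where "P = {p. p < length xs \<and> xs ! p \<noteq> c}"
  have "P \<noteq> {}"
  proof
    assume "P = {}"
    then have "xs = replicate (length xs) c"
      unfolding P_def by (auto simp: list_eq_iff_nth_eq)
    with assms show False ..
  qed
  moreover have "finite P"
    unfolding P_def by simp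
  ultimately have "Max P \<in> P" and "\<forall>p\<in>P. p \<le> Max P"
    by simp_all
  then show thesis
  proof (intro that[of "Max P"] allI impI)
    fix p
    assume "\<forall>p\<in>P. p \<le> Max P" and "Max P < p \<and> p < length xs"
    then have "p \<notin> P" by auto
    then show "xs ! p = c" using \<open>Max P < p \<and> p < length xs\<close> by (simp add: P_def)
  qed (simp_all add: P_def)
qed

lemma last_non_max_eq_list_update:
  assumes j: "j < length a" and aj: "a ! j \<noteq> k - 1"
    and tail: "\<forall>p. j < p \<and> p < length a \<longrightarrow> a ! p = k - 1"
  shows "last_non_max k a = a[j := a ! j + 1]"
proof -
  have "Max {i. 1 \<le> i \<and> i \<le> length a \<and> a ! (i - 1) \<noteq> k - 1} = Suc j"
  proof (rule Max_eqI)
    show "y \<le> Suc j" if "y \<in> {i. 1 \<le> i \<and> i \<le> length a \<and> a ! (i - 1) \<noteq> k - 1}" for y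
    proof (rule ccontr)
      assume "\<not> y \<le> Suc j"
      then have "j < y - 1" "y - 1 < length a" using that by auto
      then show False using that tail by auto
    qed
  qed (use j aj in simp_all)
  moreover have "drop (Suc j) a = replicate (length a - Suc j) (k - 1)"
    using tail by (intro replicate_eqI) (auto simp: in_set_conv_nth)
  ultimately show ?thesis
    using j by (simp add: last_non_max_def upd_conv_take_nth_drop)
qed

theorem mainTheorem4:
  fixes k :: nat and a :: "nat list"
  assumes "k \<ge> 2"
    and "set a \<subseteq> {0..<k}"
    and "a \<noteq> replicate (length a) (k - 1)"
    and "is_bracelet a"
  shows "is_bracelet (last_non_max k a)"
proof -
  obtain j where j: "j < length a" and aj: "a ! j \<noteq> k - 1"
    and tail: "\<forall>p. j < p \<and> p < length a \<longrightarrow> a ! p = k - 1"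
    using last_index_neqE[OF assms(3)] by blast
  have a_le: "set a \<subseteq> {..k - 1}"
    using assms(2) by auto
  have "a ! j \<in> set a"
    using j by simp
  then have "a ! j < k"
    using assms(2) by auto
  with aj have "a ! j < k - 1" by linarith
  then show ?thesis
    using is_bracelet_increment_before_max_tail[OF assms(4) a_le j _ tail]
      last_non_max_eq_list_update[OF j aj tail] by simp
qed

end
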